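(* Let $\mathcal{S}$ be an abstract numeration system built on a tree language with a purely periodic labeled signature. The set of $\mathcal{S}$-automatic sequences is stable under finite modifications: if $\mathbf{x}$ is $\mathcal{S}$-automatic and $\mathbf{y}$ is an infinite word over a finite alphabet that differs from $\mathbf{x}$ in only finitely many positions, then $\mathbf{y}$ is $\mathcal{S}$-automatic.
   Context: An abstract numeration system is a triple $\mathcal{S}=(L,C,<)$ with $L$ an infinite language over a totally ordered finite alphabet $C$; $\mathrm{rep}_{\mathcal{S}}(n)$ is the $(n+1)$st word of $L$ in radix order (shorter first, then lexicographic). $\mathbf{x}$ over $B$ is $\mathcal{S}$-automatic if there is a deterministic finite automaton with output $(Q,q_0,C,\delta,\mu:Q\to B)$ with $x_n=\mu(\delta(q_0,\mathrm{rep}_{\mathcal{S}}(n)))$ for all $n$. A purely periodic labeled signature over $C$ (smallest letter $0$) is a sequence $(s_n)_{n\ge0}$ with $s_n=w_{n\bmod r}$, each $w_i$ having strictly increasing letters and $w_0=0y$ with $y$ non-empty. It generates an infinite labeled tree: nodes $v_0,v_1,\ldots$ are created in breadth-first order; $v_0$ is the root; the children of $v_n$ are reached by edges labeled by the letters of $s_n$ in increasing order, new children receiving the next unused indices; for the root, the edge labeled $0$ is a loop to $v_0$ and the other letters of $s_0$ lead to $v_1,\ldots,v_{|s_0|-1}$. The tree language $L(\mathsf{s})$ is the set of labels of paths from the root not starting with $0$; $\mathcal{S}=(L(\mathsf{s}),C,<)$. *)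

theory Defs
  imports Main
begin

definition radix_less :: "'c::linorder list \<Rightarrow> 'c list \<Rightarrow> bool" where
  "radix_less v w \<longleftrightarrow> length v < length w \<or>
     (length v = length w \<and> (v, w) \<in> lexord {(a, b). a < b})"

definition is_ANS :: "'c::linorder list set \<Rightarrow> 'c set \<Rightarrow> bool" where
  "is_ANS L C \<longleftrightarrow> finite C \<and> infinite L \<and> L \<subseteq> lists C"

definition rep_ANS :: "'c::linorder list set \<Rightarrow> nat \<Rightarrow> 'c list" where
  "rep_ANS L n = (THE w. w \<in> L \<and> card {v \<in> L. radix_less v w} = n)"

definition automatic :: "'c::linorder list set \<Rightarrow> 'c set \<Rightarrow> (nat \<Rightarrow> 'b) \<Rightarrow> bool" where
  "automatic L C x \<longleftrightarrow>
     (\<exists>(Q :: nat set) q0 (\<delta> :: nat \<Rightarrow> 'c \<Rightarrow> nat) (\<mu> :: nat \<Rightarrow> 'b).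
        finite Q \<and> q0 \<in> Q \<and> (\<forall>q\<in>Q. \<forall>a\<in>C. \<delta> q a \<in> Q) \<and>
        (\<forall>n. x n = \<mu> (foldl \<delta> q0 (rep_ANS L n))))"

text \<open>A purely periodic labeled signature over C is given by its period
  ws = [w_0, ..., w_{r-1}] (r \<ge> 1): s_n = w_{n mod r}; every w_i has strictly increasing
  letters from C, and w_0 = 0 y with 0 = Min C the smallest letter and y non-empty.\<close>
definition periodic_signature :: "'c::linorder set \<Rightarrow> 'c list list \<Rightarrow> bool" where
  "periodic_signature C ws \<longleftrightarrow> finite C \<and> C \<noteq> {} \<and> ws \<noteq> [] \<and>
     (\<forall>w\<in>set ws. sorted_wrt (<) w \<and> set w \<subseteq> C) \<and>
     (\<exists>y. y \<noteq> [] \<and> hd ws = Min C # y)"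

definition sig :: "'c list list \<Rightarrow> nat \<Rightarrow> 'c list" where
  "sig ws n = ws ! (n mod length ws)"

text \<open>Children of v_n receive the indices S(n), S(n)+1, ... with S(n) = sum of |s_m|, m<n
  (breadth-first numbering; for the root, the child at position 0 is v_0 itself: the loop).\<close>
definition first_child :: "'c list list \<Rightarrow> nat \<Rightarrow> nat" where
  "first_child ws n = (\<Sum>m<n. length (sig ws m))"

definition tree_step :: "'c list list \<Rightarrow> nat option \<Rightarrow> 'c \<Rightarrow> nat option" where
  "tree_step ws p a = (case p of None \<Rightarrow> None
     | Some n \<Rightarrow> (if a \<in> set (sig ws n)
                  then Some (first_child ws n + (LEAST j. sig ws n ! j = a)) else None))"

definition tree_language :: "'c::linorder set \<Rightarrow> 'c list list \<Rightarrow> 'c list set" where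
  "tree_language C ws = {w. foldl (tree_step ws) (Some 0) w \<noteq> None \<and>
                            (w = [] \<or> hd w \<noteq> Min C)}"

end

theory Submission imports Defs begin

text \<open>The theorem holds for every abstract numeration system. Each position n is read as the word rep n, and rep is
  injective. Choose K bounding the lengths of rep n over the finitely many positions
  where x and y differ. Run the automaton for x in parallel with an automaton that
  remembers the input read so far as long as it has length at most K. If the input
  rep n is that short, it determines n and the output is y n; otherwise n is not an
  exceptional position and the output of the automaton for x is correct.\<close>

lemma radix_less_irrefl: "\<not> radix_less (v::'c::linorder list) v"
proof -
  have "(v, v) \<notin> lexord {(a::'c, b). a < b}"
    by (rule lexord_irreflexive) simp
  thus ?thesis unfolding radix_less_def by simp
qed

lemma radix_less_trans:
  assumes "radix_less (u::'c::linorder list) v" and "radix_less v w"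
  shows "radix_less u w"
proof (cases "length u < length w")
  case True
  thus ?thesis unfolding radix_less_def by simp
next
  case False
  have lengths: "length u = length v" "length v = length w"
    using assms False unfolding radix_less_def by linarith+
  have "trans {(a::'c, b). a < b}" by (rule transI) simp
  moreover have "(u, v) \<in> lexord {(a, b). a < b}" "(v, w) \<in> lexord {(a, b). a < b}"
    using assms lengths unfolding radix_less_def by auto
  ultimately have "(u, w) \<in> lexord {(a, b). a < b}" using lexord_trans by blast
  thus ?thesis using lengths unfolding radix_less_def by simp
qed

lemma radix_less_linear: "(v::'c::linorder list) \<noteq> w \<Longrightarrow> radix_less v w \<or> radix_less w v"
proof -
  assume "v \<noteq> w"
  have "total {(a::'c, b). a < b}" by (auto simp: total_on_def)
  hence "total (lexord {(a::'c, b). a < b})" by (rule total_lexord)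
  hence "(v, w) \<in> lexord {(a, b). a < b} \<or> (w, v) \<in> lexord {(a, b). a < b}"
    using \<open>v \<noteq> w\<close> unfolding total_on_def by blast
  thus ?thesis unfolding radix_less_def by linarith
qed

lemma finite_radix_less_below:
  assumes "finite C"
  shows "finite {v \<in> lists C. radix_less v w}"
proof (rule finite_subset)
  show "{v \<in> lists C. radix_less v w} \<subseteq> {v. set v \<subseteq> C \<and> length v \<le> length w}"
    unfolding radix_less_def by auto
  show "finite {v. set v \<subseteq> C \<and> length v \<le> length w}"
    using assms by (rule finite_lists_length_le)
qed

text \<open>By definition, rep_ANS L is the inverse of this rank function.\<close>
lemma bij_betw_radix_rank:
  assumes "is_ANS L C"
  shows "bij_betw (\<lambda>w. card {v \<in> L. radix_less v w}) L UNIV"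
proof -
  define rank where "rank w = card {v \<in> L. radix_less v w}" for w
  have below_finite: "finite {v \<in> L. radix_less v w}" for w
  proof (rule finite_subset)
    show "finite {v \<in> lists C. radix_less v w}"
      using assms finite_radix_less_below unfolding is_ANS_def by blast
    show "{v \<in> L. radix_less v w} \<subseteq> {v \<in> lists C. radix_less v w}"
      using assms unfolding is_ANS_def by blast
  qed
  have rank_mono: "rank v < rank w" if "radix_less v w" "v \<in> L" for v w
  proof -
    have "{u \<in> L. radix_less u v} \<subset> {u \<in> L. radix_less u w}"
      using that radix_less_trans radix_less_irrefl by blast
    with below_finite show ?thesis unfolding rank_def by (rule psubset_card_mono)
  qed
  have inj: "inj_on rank L"
  proof (rule inj_onI, rule ccontr)
    fix v w assume "v \<in> L" "w \<in> L" "rank v = rank w" "v \<noteq> w"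
    from radix_less_linear[OF \<open>v \<noteq> w\<close>] show False
      using rank_mono[of v w] rank_mono[of w v] \<open>v \<in> L\<close> \<open>w \<in> L\<close> \<open>rank v = rank w\<close>
      by auto
  qed
  have downward_closed: "{..<rank w} \<subseteq> rank ` L" if "w \<in> L" for w
  proof -
    let ?B = "{v \<in> L. radix_less v w}"
    have "rank ` ?B \<subseteq> {..<rank w}" using rank_mono by auto
    moreover have "card (rank ` ?B) = card {..<rank w}"
      using card_image[OF inj_on_subset[OF inj]] by (simp add: rank_def)
    ultimately have "rank ` ?B = {..<rank w}"
      by (intro card_subset_eq) simp_all
    thus ?thesis by blast
  qed
  have "rank ` L = UNIV"
  proof (intro set_eqI iffI)
    fix n :: nat
    have "infinite (rank ` L)"
      using assms inj finite_imageD unfolding is_ANS_def by blast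
    then obtain m where "m \<in> rank ` L" "n < m"
      using finite_nat_set_iff_bounded_le not_le by meson
    then obtain w where "w \<in> L" "n < rank w" by blast
    thus "n \<in> rank ` L" using downward_closed by blast
  qed simp
  with inj show ?thesis unfolding rank_def bij_betw_def by simp
qed

lemma rep_ANS:
  assumes "is_ANS L C"
  shows "rep_ANS L n \<in> L" and "card {v \<in> L. radix_less v (rep_ANS L n)} = n"
proof -
  let ?rank = "\<lambda>w. card {v \<in> L. radix_less v w}"
  have bij: "bij_betw ?rank L UNIV" using assms by (rule bij_betw_radix_rank)
  have inj: "inj_on ?rank L" using bij by (rule bij_betw_imp_inj_on)
  have surj: "?rank ` L = UNIV" using bij by (rule bij_betw_imp_surj_on)
  have "n \<in> ?rank ` L" unfolding surj ..
  then obtain w where w: "w \<in> L" "?rank w = n" by auto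
  have "\<exists>!w. w \<in> L \<and> ?rank w = n"
  proof (rule ex1I)
    show "w \<in> L \<and> ?rank w = n" using w by simp
    show "u = w" if "u \<in> L \<and> ?rank u = n" for u
      by (rule inj_onD[OF inj]) (use that w in simp_all)
  qed
  then have "rep_ANS L n \<in> L \<and> ?rank (rep_ANS L n) = n"
    unfolding rep_ANS_def by (rule theI')
  then show "rep_ANS L n \<in> L" "?rank (rep_ANS L n) = n" by simp_all
qed

lemma inj_rep_ANS:
  assumes "is_ANS L C"
  shows "inj (rep_ANS L)"
proof (rule injI)
  fix m n assume "rep_ANS L m = rep_ANS L n"
  then show "m = n" by (metis rep_ANS(2)[OF assms])
qed

lemma rep_ANS_in_lists: "is_ANS L C \<Longrightarrow> rep_ANS L n \<in> lists C"
  using rep_ANS(1) unfolding is_ANS_def by blast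

lemma foldl_simulation:
  assumes closed: "\<forall>q\<in>Q. \<forall>a\<in>C. \<delta> q a \<in> Q"
    and commute: "\<forall>q\<in>Q. \<forall>a\<in>C. h (\<delta> q a) = \<delta>' (h q) a"
    and "q \<in> Q" and "w \<in> lists C"
  shows "foldl \<delta> q w \<in> Q \<and> h (foldl \<delta> q w) = foldl \<delta>' (h q) w"
  using assms(3,4)
proof (induction w arbitrary: q)
  case (Cons a w)
  then have "\<delta> q a \<in> Q" "h (\<delta> q a) = \<delta>' (h q) a" using closed commute by auto
  with Cons show ?case by simp
qed simp

lemma foldl_pair_step:
  "foldl (\<lambda>(p, q) a. (f p a, g q a)) (p, q) w = (foldl f p w, foldl g q w)"
  by (induction w arbitrary: p q) simp_all

text \<open>States may be taken from any type: a finite state set is renumbered by naturals.\<close>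
lemma automaticI:
  fixes Q :: "'s set" and \<delta> :: "'s \<Rightarrow> 'c::linorder \<Rightarrow> 's" and \<mu> :: "'s \<Rightarrow> 'b"
  assumes "is_ANS L C" and "finite Q" and "q0 \<in> Q" and closed: "\<forall>q\<in>Q. \<forall>a\<in>C. \<delta> q a \<in> Q"
    and runs: "\<forall>n. x n = \<mu> (foldl \<delta> q0 (rep_ANS L n))"
  shows "automatic L C x"
proof -
  obtain g :: "'s \<Rightarrow> nat" and N where g: "inj_on g Q" "g ` Q = {i. i < N}"
    using finite_imp_inj_to_nat_seg[OF \<open>finite Q\<close>] by blast
  define \<delta>' where "\<delta>' s a = g (\<delta> (inv_into Q g s) a)" for s a
  define \<mu>' where "\<mu>' s = \<mu> (inv_into Q g s)" for s
  have commute: "\<forall>q\<in>Q. \<forall>a\<in>C. g (\<delta> q a) = \<delta>' (g q) a"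
    unfolding \<delta>'_def using g(1) by simp
  have "x n = \<mu>' (foldl \<delta>' (g q0) (rep_ANS L n))" for n
  proof -
    have "foldl \<delta> q0 (rep_ANS L n) \<in> Q"
      and "foldl \<delta>' (g q0) (rep_ANS L n) = g (foldl \<delta> q0 (rep_ANS L n))"
      using foldl_simulation[OF closed commute \<open>q0 \<in> Q\<close> rep_ANS_in_lists[OF assms(1)]]
      by simp_all
    then show ?thesis using runs by (simp add: \<mu>'_def inv_into_f_f[OF g(1)])
  qed
  moreover have "\<forall>s\<in>g ` Q. \<forall>a\<in>C. \<delta>' s a \<in> g ` Q"
    using closed g(1) by (auto simp: \<delta>'_def)
  ultimately show ?thesis
    unfolding automatic_def using \<open>finite Q\<close> \<open>q0 \<in> Q\<close> by blast
qed

definition bounded_word :: "nat \<Rightarrow> 'a list \<Rightarrow> 'a list option" where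
  "bounded_word K u = (if length u \<le> K then Some u else None)"

definition bounded_word_step :: "nat \<Rightarrow> 'a list option \<Rightarrow> 'a \<Rightarrow> 'a list option" where
  "bounded_word_step K p a = (case p of None \<Rightarrow> None | Some w \<Rightarrow> bounded_word K (w @ [a]))"

lemma foldl_bounded_word_step:
  "foldl (bounded_word_step K) (Some []) u = bounded_word K u"
  by (induction u rule: rev_induct)
     (auto simp: bounded_word_def bounded_word_step_def)

theorem automatic_finite_modification:
  fixes C :: "'c::linorder set" and x y :: "nat \<Rightarrow> 'b"
  assumes ans: "is_ANS L C" and "automatic L C x" and "finite {n. x n \<noteq> y n}"
  shows "automatic L C y"
proof -
  let ?rep = "rep_ANS L"
  obtain Q q0 and \<delta> :: "nat \<Rightarrow> 'c \<Rightarrow> nat" and \<mu> :: "nat \<Rightarrow> 'b" where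
    Q: "finite Q" "q0 \<in> Q" "\<forall>q\<in>Q. \<forall>a\<in>C. \<delta> q a \<in> Q"
    and x: "\<forall>n. x n = \<mu> (foldl \<delta> q0 (?rep n))"
    using \<open>automatic L C x\<close> unfolding automatic_def by blast
  have "finite (length ` ?rep ` {n. x n \<noteq> y n})"
    using \<open>finite {n. x n \<noteq> y n}\<close> by simp
  then obtain K where "\<forall>m \<in> length ` ?rep ` {n. x n \<noteq> y n}. m \<le> K"
    unfolding finite_nat_set_iff_bounded_le ..
  then have K: "x n = y n" if "K < length (?rep n)" for n
    using that by force
  define P where "P = insert None (Some ` {w. set w \<subseteq> C \<and> length w \<le> K})"
  define \<delta>' where "\<delta>' = (\<lambda>(p, q) a. (bounded_word_step K p a, \<delta> q a))"
  define \<mu>' where "\<mu>' = (\<lambda>(p, q). case p of None \<Rightarrow> \<mu> q | Some w \<Rightarrow> y (inv ?rep w))"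
  show ?thesis
  proof (rule automaticI[OF ans, of "P \<times> Q" "(Some [], q0)" \<delta>' _ \<mu>'])
    have "finite {w. set w \<subseteq> C \<and> length w \<le> K}"
      using ans finite_lists_length_le unfolding is_ANS_def by blast
    then show "finite (P \<times> Q)" using Q(1) by (simp add: P_def)
    show "(Some [], q0) \<in> P \<times> Q" using Q(2) by (simp add: P_def)
    have "bounded_word_step K p a \<in> P" if "p \<in> P" "a \<in> C" for p a
      using that by (auto simp: P_def bounded_word_step_def bounded_word_def)
    then show "\<forall>s\<in>P \<times> Q. \<forall>a\<in>C. \<delta>' s a \<in> P \<times> Q"
      using Q(3) by (auto simp: \<delta>'_def)
    show "\<forall>n. y n = \<mu>' (foldl \<delta>' (Some [], q0) (?rep n))"
    proof
      fix n
      have run: "foldl \<delta>' (Some [], q0) (?rep n) = (bounded_word K (?rep n), foldl \<delta> q0 (?rep n))"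
        unfolding \<delta>'_def foldl_pair_step foldl_bounded_word_step ..
      show "y n = \<mu>' (foldl \<delta>' (Some [], q0) (?rep n))"
      proof (cases "length (?rep n) \<le> K")
        case True
        then show ?thesis
          by (simp add: run \<mu>'_def bounded_word_def inv_f_f[OF inj_rep_ANS[OF ans]])
      next
        case False
        then show ?thesis using K[of n] x by (simp add: run \<mu>'_def bounded_word_def)
      qed
    qed
  qed
qed

theorem mainTheorem14:
  fixes C :: "'c::linorder set" and ws :: "'c list list" and x y :: "nat \<Rightarrow> 'b"
  assumes "periodic_signature C ws"
    and "is_ANS (tree_language C ws) C"
    and "automatic (tree_language C ws) C x"
    and "finite {n. x n \<noteq> y n}"
  shows "automatic (tree_language C ws) C y"
  using automatic_finite_modification assms(2-4) .

end
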